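(* Let $\varphi \in L^1(\mathbb{R}^n)$ satisfy $\int_{\mathbb{R}^n}\varphi = 1$ and $\int_{\mathbb{R}^n}|y|^{1/2}|\varphi(y)|\,dy < \infty$, and for $\varepsilon>0$ let $\varphi_\varepsilon(x) = \varepsilon^{-n}\varphi(x/\varepsilon)$. Let $T>0$. Then for every $U \in L^1((0,T); B(\mathbb{R}^n))$, \[ \lim_{\varepsilon\to0}\int_0^T \|U(t,\cdot) - \varphi_\varepsilon * U(t,\cdot)\|_{B(\mathbb{R}^n)}\,dt = 0, \] where the convolution is in the spatial variables only.
   Context: Let $D_0 = \{|x|\le 1\}$, $D_j = \{2^{j-1} < |x| \le 2^j\}$ ($j\in\mathbb{N}$) in $\mathbb{R}^n$. $B(\mathbb{R}^n)$ is the Banach space with norm $\|f\|_{B(\mathbb{R}^n)} = \sum_{j\in\mathbb{N}_0} 2^{j/2}\|f\|_{L^2(D_j)}$. *)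

theory Defs
  imports "HOL-Analysis.Analysis"
begin

definition dyadic_shell :: "nat \<Rightarrow> 'a::euclidean_space set" where
  "dyadic_shell j = (if j = 0 then {x. norm x \<le> 1}
                     else {x. 2 ^ (j - 1) < norm x \<and> norm x \<le> 2 ^ j})"

definition L2_norm_on :: "('a::euclidean_space \<Rightarrow> real) \<Rightarrow> 'a set \<Rightarrow> ennreal" where
  "L2_norm_on f A = (let I = (\<integral>\<^sup>+ x \<in> A. ennreal ((f x)\<^sup>2) \<partial>lborel)
                     in if I = \<infinity> then \<infinity> else ennreal (sqrt (enn2real I)))"

text \<open>The norm of B(R^n): sum over j of 2^(j/2) times the L^2(D_j) norm (extended-valued;
  f belongs to B iff f is Lebesgue measurable and this quantity is finite).\<close>
definition B_norm :: "('a::euclidean_space \<Rightarrow> real) \<Rightarrow> ennreal" where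
  "B_norm f = (\<Sum>j. ennreal (2 powr (real j / 2)) * L2_norm_on f (dyadic_shell j))"

definition mollify :: "('a::euclidean_space \<Rightarrow> real) \<Rightarrow> real \<Rightarrow> 'a \<Rightarrow> real" where
  "mollify \<phi> \<epsilon> x = (1 / \<epsilon>) ^ DIM('a) * \<phi> ((1 / \<epsilon>) *\<^sub>R x)"

definition convol :: "('a::euclidean_space \<Rightarrow> real) \<Rightarrow> ('a \<Rightarrow> real) \<Rightarrow> 'a \<Rightarrow> real" where
  "convol f g x = (\<integral> y. f (x - y) * g y \<partial>lborel)"

end

theory Submission
  imports Defs
begin

text \<open>
  Writing \<open>f - \<phi>\<^sub>\<epsilon> * f\<close> as \<open>\<integral> \<phi>(w) (f - f(\<cdot> - \<epsilon>w)) dw\<close>, Minkowski's integral inequality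
  bounds its \<open>B\<close>-norm by \<open>\<integral> |\<phi>(w)| \<parallel>f(\<cdot> - \<epsilon>w) - f\<parallel>\<^sub>B dw\<close>. A translation by \<open>h\<close>
  with \<open>|h| \<le> 2\<^sup>p\<close> moves each shell \<open>D\<^sub>j\<close>, \<open>j \<ge> p + 2\<close>, into \<open>D\<^sub>j\<^sub>-\<^sub>1 \<union> D\<^sub>j \<union> D\<^sub>j\<^sub>+\<^sub>1\<close>, and the
  remaining shells into the ball of radius \<open>2\<^sup>p\<^sup>+\<^sup>2\<close>, which is covered by shells of total
  weight \<open>O(2\<^sup>p\<^sup>/\<^sup>2)\<close>. Hence \<open>\<parallel>f(\<cdot> + h)\<parallel>\<^sub>B \<le> C (1 + |h|\<^sup>1\<^sup>/\<^sup>2) \<parallel>f\<parallel>\<^sub>B\<close>, and the moment condition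
  on \<open>\<phi>\<close> turns this into an integrable majorant. Translation is also continuous in \<open>B\<close>:
  split \<open>f\<close> into a part supported in a large ball, where the \<open>B\<close>-norm is controlled by the
  \<open>L\<^sup>2\<close>-norm and translation is continuous in \<open>L\<^sup>2\<close>, and a tail that is small in \<open>B\<close>.
  Dominated convergence in \<open>w\<close> gives the limit for each fixed time, and dominated
  convergence in \<open>t\<close>, with majorant \<open>C \<parallel>U(t)\<parallel>\<^sub>B\<close>, gives the theorem.
\<close>

section \<open>Norms of nonnegative functions\<close>

definition esqrt :: "ennreal \<Rightarrow> ennreal" where
  "esqrt a = (if a = \<infinity> then \<infinity> else ennreal (sqrt (enn2real a)))"

lemma power2_esqrt [simp]: "(esqrt a)\<^sup>2 = a"
  by (cases a) (auto simp: esqrt_def ennreal_power)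

lemma esqrt_power2 [simp]: "esqrt (a\<^sup>2) = a"
  by (cases a) (auto simp: esqrt_def ennreal_power)

lemma power2_le_power2_ennreal_iff: "(a::ennreal)\<^sup>2 \<le> b\<^sup>2 \<longleftrightarrow> a \<le> b"
proof
  assume le: "a\<^sup>2 \<le> b\<^sup>2"
  show "a \<le> b"
  proof (rule ccontr)
    assume "\<not> a \<le> b"
    then have "b\<^sup>2 < a\<^sup>2"
      by (cases a; cases b) (auto simp: ennreal_power ennreal_less_iff power_strict_mono)
    with le show False
      by simp
  qed
qed (rule power_mono_ennreal)

lemma esqrt_le_iff: "esqrt a \<le> b \<longleftrightarrow> a \<le> b\<^sup>2"
  by (metis power2_esqrt power2_le_power2_ennreal_iff)

lemma le_esqrt_iff: "b \<le> esqrt a \<longleftrightarrow> b\<^sup>2 \<le> a"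
  by (metis power2_esqrt power2_le_power2_ennreal_iff)

lemma esqrt_mono: "a \<le> b \<Longrightarrow> esqrt a \<le> esqrt b"
  by (metis power2_esqrt power2_le_power2_ennreal_iff)

lemma esqrt_mult: "esqrt (a * b) = esqrt a * esqrt b"
  by (metis esqrt_power2 power2_esqrt power_mult_distrib)

lemma esqrt_0 [simp]: "esqrt 0 = 0"
  using esqrt_power2[of 0] by simp

lemma esqrt_less_top_iff [simp]: "esqrt a < top \<longleftrightarrow> a < top"
  by (auto simp: esqrt_def less_top)

lemma borel_measurable_esqrt [measurable]: "esqrt \<in> borel_measurable borel"
  unfolding esqrt_def by measurable

lemma tendsto_esqrt_0:
  assumes "(f \<longlongrightarrow> 0) F"
  shows "((\<lambda>x. esqrt (f x)) \<longlongrightarrow> 0) F"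
proof (rule order_tendstoI)
  fix a :: ennreal
  assume "0 < a"
  then have "0 < a\<^sup>2"
    by (simp add: zero_less_iff_neq_zero)
  with assms have "eventually (\<lambda>x. f x < a\<^sup>2) F"
    by (rule order_tendstoD)
  then show "eventually (\<lambda>x. esqrt (f x) < a) F"
    by eventually_elim (simp add: not_le[symmetric] le_esqrt_iff)
qed simp

text \<open>
  For \<open>[0, \<infinity>]\<close>-valued functions Minkowski's integral inequality holds for \<open>\<integral>\<^sup>+\<close> without
  any integrability hypotheses.
\<close>

definition nn_L2_norm_on :: "('a::euclidean_space \<Rightarrow> ennreal) \<Rightarrow> 'a set \<Rightarrow> ennreal" where
  "nn_L2_norm_on g A = esqrt (\<integral>\<^sup>+x. (g x)\<^sup>2 * indicator A x \<partial>lborel)"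

definition nn_B_norm :: "('a::euclidean_space \<Rightarrow> ennreal) \<Rightarrow> ennreal" where
  "nn_B_norm g = (\<Sum>j. ennreal (sqrt 2 ^ j) * nn_L2_norm_on g (dyadic_shell j))"

lemma L2_norm_on_eq_nn_L2_norm_on: "L2_norm_on f A = nn_L2_norm_on (\<lambda>x. ennreal \<bar>f x\<bar>) A"
  by (simp add: L2_norm_on_def nn_L2_norm_on_def esqrt_def Let_def ennreal_power)

lemma two_powr_half: "2 powr (real j / 2) = sqrt 2 ^ j"
proof -
  have "2 powr (real j / 2) = (2 powr (1 / 2)) powr real j"
    by (simp add: powr_powr)
  then show ?thesis
    by (simp add: powr_half_sqrt powr_realpow)
qed

lemma B_norm_eq_nn_B_norm: "B_norm f = nn_B_norm (\<lambda>x. ennreal \<bar>f x\<bar>)"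
  by (simp add: B_norm_def nn_B_norm_def L2_norm_on_eq_nn_L2_norm_on two_powr_half)

lemma dyadic_shell_sets [measurable]: "dyadic_shell j \<in> sets borel"
  unfolding dyadic_shell_def by auto

lemma borel_measurable_nn_L2_norm_on [measurable (raw)]:
  assumes "(\<lambda>(t, x). g t x) \<in> borel_measurable (M \<Otimes>\<^sub>M lborel)" "A \<in> sets borel"
  shows "(\<lambda>t. nn_L2_norm_on (g t) A) \<in> borel_measurable M"
  unfolding nn_L2_norm_on_def using assms by measurable

lemma borel_measurable_nn_B_norm [measurable (raw)]:
  assumes "(\<lambda>(t, x). g t x) \<in> borel_measurable (M \<Otimes>\<^sub>M lborel)"
  shows "(\<lambda>t. nn_B_norm (g t)) \<in> borel_measurable M"
  unfolding nn_B_norm_def using assms by measurable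

lemma borel_measurable_B_norm:
  assumes "(\<lambda>(t, x). f t x) \<in> borel_measurable (M \<Otimes>\<^sub>M lborel)"
  shows "(\<lambda>t. B_norm (f t)) \<in> borel_measurable M"
  unfolding B_norm_eq_nn_B_norm using assms by measurable

lemma nn_L2_norm_on_mono:
  "(\<And>x. x \<in> A \<Longrightarrow> g x \<le> g' x) \<Longrightarrow> nn_L2_norm_on g A \<le> nn_L2_norm_on g' A"
  unfolding nn_L2_norm_on_def
  by (intro esqrt_mono nn_integral_mono) (auto simp: indicator_def intro: power_mono_ennreal)

lemma nn_L2_norm_on_mono_set: "A \<subseteq> A' \<Longrightarrow> nn_L2_norm_on g A \<le> nn_L2_norm_on g A'"
  unfolding nn_L2_norm_on_def
  by (intro esqrt_mono nn_integral_mono) (auto simp: indicator_def)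

lemma nn_L2_norm_on_cmult:
  assumes [measurable]: "g \<in> borel_measurable borel" "A \<in> sets borel"
  shows "nn_L2_norm_on (\<lambda>x. c * g x) A = c * nn_L2_norm_on g A"
proof -
  have "(\<integral>\<^sup>+x. (c * g x)\<^sup>2 * indicator A x \<partial>lborel) = c\<^sup>2 * (\<integral>\<^sup>+x. (g x)\<^sup>2 * indicator A x \<partial>lborel)"
    by (subst nn_integral_cmult[symmetric]) (auto simp: power_mult_distrib mult.assoc)
  then show ?thesis
    unfolding nn_L2_norm_on_def by (simp add: esqrt_mult)
qed

lemma nn_L2_norm_on_Cauchy_Schwarz:
  assumes [measurable]: "f \<in> borel_measurable borel" "g \<in> borel_measurable borel" "A \<in> sets borel"
  shows "(\<integral>\<^sup>+x. f x * g x * indicator A x \<partial>lborel) \<le> nn_L2_norm_on f A * nn_L2_norm_on g A"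
proof -
  have "(\<integral>\<^sup>+x. f x * g x * indicator A x \<partial>lborel) =
      (\<integral>\<^sup>+x. (f x * indicator A x) * (g x * indicator A x) \<partial>lborel)"
    by (intro nn_integral_cong) (auto simp: indicator_def)
  also have "\<dots> \<le> esqrt ((\<integral>\<^sup>+x. (f x * indicator A x)\<^sup>2 \<partial>lborel) * (\<integral>\<^sup>+x. (g x * indicator A x)\<^sup>2 \<partial>lborel))"
    unfolding le_esqrt_iff by (rule Cauchy_Schwarz_nn_integral) auto
  also have "\<dots> = nn_L2_norm_on f A * nn_L2_norm_on g A"
    unfolding nn_L2_norm_on_def esqrt_mult[symmetric]
    by (intro arg_cong[where f = esqrt] arg_cong2[where f = "(*)"] nn_integral_cong)
      (auto simp: indicator_def)
  finally show ?thesis .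
qed

lemma nn_L2_norm_on_add:
  assumes [measurable]: "f \<in> borel_measurable borel" "g \<in> borel_measurable borel" "A \<in> sets borel"
  shows "nn_L2_norm_on (\<lambda>x. f x + g x) A \<le> nn_L2_norm_on f A + nn_L2_norm_on g A"
proof -
  have "(\<integral>\<^sup>+x. (f x + g x)\<^sup>2 * indicator A x \<partial>lborel) =
      (\<integral>\<^sup>+x. (f x)\<^sup>2 * indicator A x + (2 * (f x * g x * indicator A x) + (g x)\<^sup>2 * indicator A x) \<partial>lborel)"
    by (intro nn_integral_cong) (simp add: power2_sum algebra_simps)
  also have "\<dots> = (\<integral>\<^sup>+x. (f x)\<^sup>2 * indicator A x \<partial>lborel) +
      (2 * (\<integral>\<^sup>+x. f x * g x * indicator A x \<partial>lborel) + (\<integral>\<^sup>+x. (g x)\<^sup>2 * indicator A x \<partial>lborel))"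
    by (simp add: nn_integral_add nn_integral_cmult)
  also have "\<dots> \<le> (nn_L2_norm_on f A)\<^sup>2 +
      (2 * (nn_L2_norm_on f A * nn_L2_norm_on g A) + (nn_L2_norm_on g A)\<^sup>2)"
    by (intro add_mono mult_left_mono nn_L2_norm_on_Cauchy_Schwarz order.refl)
      (auto simp: nn_L2_norm_on_def)
  also have "\<dots> = (nn_L2_norm_on f A + nn_L2_norm_on g A)\<^sup>2"
    by (simp add: power2_sum algebra_simps)
  finally show ?thesis
    unfolding nn_L2_norm_on_def esqrt_le_iff .
qed

lemma nn_L2_norm_on_sum:
  assumes [measurable]: "\<And>i. i \<in> I \<Longrightarrow> f i \<in> borel_measurable borel" "A \<in> sets borel"
  shows "nn_L2_norm_on (\<lambda>x. \<Sum>i\<in>I. f i x) A \<le> (\<Sum>i\<in>I. nn_L2_norm_on (f i) A)"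
  using assms(1)
proof (induction I rule: infinite_finite_induct)
  case (insert i I)
  have "nn_L2_norm_on (\<lambda>x. \<Sum>i\<in>insert i I. f i x) A = nn_L2_norm_on (\<lambda>x. f i x + (\<Sum>i\<in>I. f i x)) A"
    using insert.hyps by simp
  also have "\<dots> \<le> nn_L2_norm_on (f i) A + nn_L2_norm_on (\<lambda>x. \<Sum>i\<in>I. f i x) A"
    using insert.prems by (intro nn_L2_norm_on_add) auto
  also have "\<dots> \<le> (\<Sum>i\<in>insert i I. nn_L2_norm_on (f i) A)"
    using insert by (simp add: add_left_mono)
  finally show ?case .
qed (simp_all add: nn_L2_norm_on_def)

lemma nn_L2_norm_on_Un:
  assumes [measurable]: "f \<in> borel_measurable borel" "A \<in> sets borel" "B \<in> sets borel"
  shows "nn_L2_norm_on f (A \<union> B) \<le> nn_L2_norm_on f A + nn_L2_norm_on f B"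
proof -
  have "(\<integral>\<^sup>+x. (f x)\<^sup>2 * indicator (A \<union> B) x \<partial>lborel) \<le>
      (\<integral>\<^sup>+x. (f x)\<^sup>2 * indicator A x + (f x)\<^sup>2 * indicator B x \<partial>lborel)"
    by (intro nn_integral_mono) (auto simp: indicator_def)
  also have "\<dots> = (nn_L2_norm_on f A)\<^sup>2 + (nn_L2_norm_on f B)\<^sup>2"
    by (simp add: nn_integral_add nn_L2_norm_on_def)
  also have "\<dots> \<le> (nn_L2_norm_on f A + nn_L2_norm_on f B)\<^sup>2"
    by (simp add: power2_eq_square algebra_simps add_increasing)
  finally show ?thesis
    unfolding nn_L2_norm_on_def esqrt_le_iff .
qed

lemma nn_L2_norm_on_UN:
  assumes [measurable]: "f \<in> borel_measurable borel" "\<And>i. i \<in> I \<Longrightarrow> A i \<in> sets borel"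
    and "finite I"
  shows "nn_L2_norm_on f (\<Union>i\<in>I. A i) \<le> (\<Sum>i\<in>I. nn_L2_norm_on f (A i))"
  using \<open>finite I\<close> assms(2)
proof (induction I rule: finite_induct)
  case (insert i I)
  then have "nn_L2_norm_on f (A i \<union> (\<Union>i\<in>I. A i)) \<le> nn_L2_norm_on f (A i) + nn_L2_norm_on f (\<Union>i\<in>I. A i)"
    by (intro nn_L2_norm_on_Un) auto
  with insert show ?case
    by (simp add: add_left_mono order_trans)
qed (simp add: nn_L2_norm_on_def)

lemma nn_integral_translate:
  fixes F :: "'a::euclidean_space \<Rightarrow> ennreal"
  assumes [measurable]: "F \<in> borel_measurable borel"
  shows "(\<integral>\<^sup>+x. F (x + h) \<partial>lborel) = (\<integral>\<^sup>+x. F x \<partial>lborel)"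
proof -
  have "(\<integral>\<^sup>+x. F x \<partial>lborel) = (\<integral>\<^sup>+x. F x \<partial>distr lborel borel ((+) h))"
    by (simp add: lborel_distr_plus)
  also have "\<dots> = (\<integral>\<^sup>+x. F (h + x) \<partial>lborel)"
    by (rule nn_integral_distr) auto
  finally show ?thesis
    by (simp add: add.commute)
qed

lemma nn_L2_norm_on_translate_le:
  fixes g :: "'a::euclidean_space \<Rightarrow> ennreal"
  assumes [measurable]: "g \<in> borel_measurable borel" "S \<in> sets borel"
    and "\<And>x. x \<in> A \<Longrightarrow> x + h \<in> S"
  shows "nn_L2_norm_on (\<lambda>x. g (x + h)) A \<le> nn_L2_norm_on g S"
proof -
  have "(\<integral>\<^sup>+x. (g (x + h))\<^sup>2 * indicator A x \<partial>lborel) \<le> (\<integral>\<^sup>+x. (g (x + h))\<^sup>2 * indicator S (x + h) \<partial>lborel)"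
    using assms(3) by (intro nn_integral_mono) (auto simp: indicator_def)
  also have "\<dots> = (\<integral>\<^sup>+x. (g x)\<^sup>2 * indicator S x \<partial>lborel)"
    by (rule nn_integral_translate[where F = "\<lambda>x. (g x)\<^sup>2 * indicator S x"]) measurable
  finally show ?thesis
    unfolding nn_L2_norm_on_def by (rule esqrt_mono)
qed

lemma nn_L2_norm_on_Minkowski:
  fixes h :: "'b::euclidean_space \<times> 'a::euclidean_space \<Rightarrow> ennreal"
  assumes [measurable]: "h \<in> borel_measurable (lborel \<Otimes>\<^sub>M lborel)" "A \<in> sets borel"
  shows "nn_L2_norm_on (\<lambda>x. \<integral>\<^sup>+y. h (y, x) \<partial>lborel) A \<le> (\<integral>\<^sup>+y. nn_L2_norm_on (\<lambda>x. h (y, x)) A \<partial>lborel)"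
proof -
  define L where "L y = nn_L2_norm_on (\<lambda>x. h (y, x)) A" for y
  have [measurable]: "(\<lambda>(x, y). h (y, x)) \<in> borel_measurable (lborel \<Otimes>\<^sub>M lborel)"
    by measurable
  have [measurable]: "L \<in> borel_measurable lborel"
    unfolding L_def by measurable
  have [measurable]: "(\<lambda>x. h (y, x)) \<in> borel_measurable borel" for y
    using measurable_Pair2[OF assms(1), of y] by simp
  \<comment> \<open>Expand the square as a double integral and apply Cauchy-Schwarz in \<open>x\<close> for each pair \<open>y, y'\<close>.\<close>
  have "(\<integral>\<^sup>+x. (\<integral>\<^sup>+y. h (y, x) \<partial>lborel)\<^sup>2 * indicator A x \<partial>lborel) =
      (\<integral>\<^sup>+x. \<integral>\<^sup>+y. \<integral>\<^sup>+y'. h (y', x) * h (y, x) * indicator A x \<partial>lborel \<partial>lborel \<partial>lborel)"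
    by (intro nn_integral_cong)
      (simp add: power2_eq_square nn_integral_multc[symmetric] nn_integral_cmult[symmetric])
  also have "\<dots> = (\<integral>\<^sup>+y. \<integral>\<^sup>+y'. \<integral>\<^sup>+x. h (y', x) * h (y, x) * indicator A x \<partial>lborel \<partial>lborel \<partial>lborel)"
    by (subst lborel_pair.Fubini', measurable, intro nn_integral_cong lborel_pair.Fubini'[symmetric])
      measurable
  also have "\<dots> \<le> (\<integral>\<^sup>+y. \<integral>\<^sup>+y'. L y' * L y \<partial>lborel \<partial>lborel)"
    unfolding L_def by (intro nn_integral_mono nn_L2_norm_on_Cauchy_Schwarz) auto
  also have "\<dots> = (\<integral>\<^sup>+y. L y \<partial>lborel)\<^sup>2"
    by (simp add: power2_eq_square nn_integral_multc nn_integral_cmult)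
  finally show ?thesis
    unfolding nn_L2_norm_on_def esqrt_le_iff L_def .
qed

lemma nn_B_norm_Minkowski:
  fixes h :: "'b::euclidean_space \<times> 'a::euclidean_space \<Rightarrow> ennreal"
  assumes [measurable]: "h \<in> borel_measurable (lborel \<Otimes>\<^sub>M lborel)"
  shows "nn_B_norm (\<lambda>x. \<integral>\<^sup>+y. h (y, x) \<partial>lborel) \<le> (\<integral>\<^sup>+y. nn_B_norm (\<lambda>x. h (y, x)) \<partial>lborel)"
proof -
  have [measurable]: "(\<lambda>(x, y). h (y, x)) \<in> borel_measurable (lborel \<Otimes>\<^sub>M lborel)"
    by measurable
  have "nn_B_norm (\<lambda>x. \<integral>\<^sup>+y. h (y, x) \<partial>lborel) \<le>
      (\<Sum>j. ennreal (sqrt 2 ^ j) * (\<integral>\<^sup>+y. nn_L2_norm_on (\<lambda>x. h (y, x)) (dyadic_shell j) \<partial>lborel))"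
    unfolding nn_B_norm_def by (intro suminf_le mult_left_mono nn_L2_norm_on_Minkowski) auto
  also have "\<dots> = (\<integral>\<^sup>+y. nn_B_norm (\<lambda>x. h (y, x)) \<partial>lborel)"
    unfolding nn_B_norm_def by (simp add: nn_integral_cmult nn_integral_suminf)
  finally show ?thesis .
qed

lemma nn_B_norm_mono: "(\<And>x. g x \<le> g' x) \<Longrightarrow> nn_B_norm g \<le> nn_B_norm g'"
  unfolding nn_B_norm_def by (intro suminf_le mult_left_mono nn_L2_norm_on_mono) auto

lemma nn_B_norm_cmult:
  assumes "g \<in> borel_measurable borel"
  shows "nn_B_norm (\<lambda>x. c * g x) = c * nn_B_norm g"
  unfolding nn_B_norm_def using assms by (simp add: nn_L2_norm_on_cmult mult.left_commute)

lemma nn_B_norm_add: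
  assumes "f \<in> borel_measurable borel" "g \<in> borel_measurable borel"
  shows "nn_B_norm (\<lambda>x. f x + g x) \<le> nn_B_norm f + nn_B_norm g"
proof -
  have "nn_B_norm (\<lambda>x. f x + g x) \<le> (\<Sum>j. ennreal (sqrt 2 ^ j) * nn_L2_norm_on f (dyadic_shell j) +
      ennreal (sqrt 2 ^ j) * nn_L2_norm_on g (dyadic_shell j))"
    unfolding nn_B_norm_def distrib_left[symmetric] using assms
    by (intro suminf_le mult_left_mono nn_L2_norm_on_add) auto
  also have "\<dots> = nn_B_norm f + nn_B_norm g"
    unfolding nn_B_norm_def by (simp add: suminf_add)
  finally show ?thesis .
qed

section \<open>Translation and the dyadic shells\<close>

lemma dyadic_shell_norm_le: "x \<in> dyadic_shell j \<Longrightarrow> norm x \<le> 2 ^ j"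
  by (auto simp: dyadic_shell_def split: if_splits)

lemma dyadic_shell_norm_gt: "x \<in> dyadic_shell j \<Longrightarrow> 1 \<le> j \<Longrightarrow> 2 ^ (j - 1) < norm x"
  by (auto simp: dyadic_shell_def split: if_splits)

lemma cball_subset_dyadic_shells: "cball (0::'a::euclidean_space) (2 ^ m) \<subseteq> (\<Union>k\<le>m. dyadic_shell k)"
proof (induction m)
  case (Suc m)
  show ?case
  proof
    fix x :: 'a
    assume x: "x \<in> cball 0 (2 ^ Suc m)"
    show "x \<in> (\<Union>k\<le>Suc m. dyadic_shell k)"
    proof (cases "norm x \<le> 2 ^ m")
      case True
      then show ?thesis
        using Suc.IH by (fastforce simp: mem_cball_0)
    next
      case False
      then have "x \<in> dyadic_shell (Suc m)"
        using x by (simp add: dyadic_shell_def mem_cball_0)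
      then show ?thesis
        by blast
    qed
  qed
qed (auto simp: dyadic_shell_def)

lemma dyadic_shell_translate:
  assumes "x \<in> dyadic_shell j" "p + 2 \<le> j" "norm h \<le> 2 ^ p"
  shows "x + h \<in> dyadic_shell (j - 1) \<union> dyadic_shell j \<union> dyadic_shell (Suc j)"
proof -
  obtain i where j: "j = Suc (Suc i)" and "p \<le> i"
    using assms(2) by (intro that[of "j - 2"]) auto
  have "(2::real) ^ p \<le> 2 ^ i"
    using \<open>p \<le> i\<close> by (rule power_increasing) simp
  then have "norm h \<le> 2 ^ i"
    using assms(3) by linarith
  moreover have "2 * 2 ^ i < norm x" "norm x \<le> 4 * 2 ^ i"
    using dyadic_shell_norm_gt[OF assms(1)] dyadic_shell_norm_le[OF assms(1)] by (simp_all add: j)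
  moreover have "norm x - norm h \<le> norm (x + h)" "norm (x + h) \<le> norm x + norm h"
    using norm_triangle_ineq2[of x "- h"] norm_triangle_ineq[of x h] by simp_all
  ultimately have "2 ^ i < norm (x + h)" "norm (x + h) \<le> 8 * 2 ^ i"
    by linarith+
  then show ?thesis
    by (cases "norm (x + h) \<le> 2 * 2 ^ i"; cases "norm (x + h) \<le> 4 * 2 ^ i")
      (simp_all add: dyadic_shell_def j)
qed

lemma dyadic_shell_translate_small:
  assumes "x \<in> dyadic_shell j" "j \<le> p + 1" "norm h \<le> 2 ^ p"
  shows "x + h \<in> cball 0 (2 ^ (p + 2))"
proof -
  have "norm x \<le> 2 ^ (p + 1)"
    using dyadic_shell_norm_le[OF assms(1)] power_increasing[OF assms(2), of "2::real"] by simp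
  then have "norm (x + h) \<le> 2 ^ (p + 1) + 2 ^ p"
    using norm_triangle_ineq[of x h] assms(3) by linarith
  also have "\<dots> \<le> 2 ^ (p + 2)"
    by simp
  finally show ?thesis
    by (simp add: mem_cball_0)
qed

lemma nn_L2_norm_on_cball_le:
  assumes "g \<in> borel_measurable borel"
  shows "nn_L2_norm_on g (cball 0 (2 ^ m)) \<le> (\<Sum>k\<le>m. nn_L2_norm_on g (dyadic_shell k))"
  using nn_L2_norm_on_mono_set[OF cball_subset_dyadic_shells] nn_L2_norm_on_UN[OF assms]
  by (rule order_trans) auto

lemma nn_L2_norm_on_translate_shell_le:
  assumes [measurable]: "g \<in> borel_measurable borel" and "p + 2 \<le> j" "norm h \<le> 2 ^ p"
  shows "nn_L2_norm_on (\<lambda>x. g (x + h)) (dyadic_shell j) \<le>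
    nn_L2_norm_on g (dyadic_shell (j - 1)) + nn_L2_norm_on g (dyadic_shell j) +
    nn_L2_norm_on g (dyadic_shell (Suc j))"
proof -
  have "nn_L2_norm_on (\<lambda>x. g (x + h)) (dyadic_shell j) \<le>
      nn_L2_norm_on g (dyadic_shell (j - 1) \<union> dyadic_shell j \<union> dyadic_shell (Suc j))"
    using assms by (intro nn_L2_norm_on_translate_le dyadic_shell_translate) auto
  also have "\<dots> \<le> nn_L2_norm_on g (dyadic_shell (j - 1) \<union> dyadic_shell j) + nn_L2_norm_on g (dyadic_shell (Suc j))"
    by (intro nn_L2_norm_on_Un) auto
  also have "\<dots> \<le> nn_L2_norm_on g (dyadic_shell (j - 1)) + nn_L2_norm_on g (dyadic_shell j) +
      nn_L2_norm_on g (dyadic_shell (Suc j))"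
    by (intro add_right_mono nn_L2_norm_on_Un) auto
  finally show ?thesis .
qed

lemma sum_sqrt2_power_le: "(\<Sum>j<n. sqrt 2 ^ j) \<le> 4 * sqrt 2 ^ n"
proof (induction n)
  case (Suc n)
  have "5 / 4 \<le> sqrt (2::real)"
    by (rule real_le_rsqrt) (simp add: power2_eq_square)
  have "(\<Sum>j<Suc n. sqrt 2 ^ j) \<le> 5 * sqrt 2 ^ n"
    using Suc.IH by simp
  also have "\<dots> \<le> (4 * sqrt 2) * sqrt 2 ^ n"
    using \<open>5 / 4 \<le> sqrt 2\<close> by (intro mult_right_mono) auto
  finally show ?case
    by (simp add: mult.assoc)
qed simp

lemma ennreal_sqrt2_le_2: "ennreal (sqrt 2) \<le> 2"
  using ennreal_leI[of "sqrt 2" 2] by (simp add: real_sqrt_le_iff[of 2 4, simplified])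

lemma suminf_sqrt2_power_shift_right:
  "(\<Sum>j. ennreal (sqrt 2 ^ j) * L (j - 1)) \<le> 3 * (\<Sum>j. ennreal (sqrt 2 ^ j) * L j)"
proof -
  let ?S = "\<Sum>j. ennreal (sqrt 2 ^ j) * L j"
  have "(\<Sum>j. ennreal (sqrt 2 ^ j) * L (j - 1)) = L 0 + (\<Sum>j. ennreal (sqrt 2) * (ennreal (sqrt 2 ^ j) * L j))"
    using suminf_offset[of "\<lambda>j. ennreal (sqrt 2 ^ j) * L (j - 1)" 1]
    by (simp add: summableI add.commute ennreal_mult mult.assoc)
  also have "\<dots> = L 0 + ennreal (sqrt 2) * ?S"
    by simp
  also have "\<dots> \<le> ?S + 2 * ?S"
    using sum_le_suminf[of "\<lambda>j. ennreal (sqrt 2 ^ j) * L j" "{0}"]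
    by (intro add_mono mult_right_mono ennreal_sqrt2_le_2) (auto simp: summableI)
  also have "\<dots> = 3 * ?S"
    by (simp add: distrib_right[of 1 2 ?S, simplified])
  finally show ?thesis .
qed

lemma suminf_sqrt2_power_shift_left:
  "(\<Sum>j. ennreal (sqrt 2 ^ j) * L (Suc j)) \<le> (\<Sum>j. ennreal (sqrt 2 ^ j) * L j)"
proof -
  have "(\<Sum>j. ennreal (sqrt 2 ^ j) * L (Suc j)) \<le> (\<Sum>j. ennreal (sqrt 2 ^ Suc j) * L (Suc j))"
    by (intro suminf_le mult_right_mono ennreal_leI power_increasing) auto
  also have "\<dots> \<le> (\<Sum>j. ennreal (sqrt 2 ^ j) * L j)"
    using suminf_offset[of "\<lambda>j. ennreal (sqrt 2 ^ j) * L j" 1] by (simp add: summableI)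
  finally show ?thesis .
qed

lemma sum_dyadic_shells_le_nn_B_norm: "(\<Sum>k\<le>m. nn_L2_norm_on g (dyadic_shell k)) \<le> nn_B_norm g"
proof -
  have "(\<Sum>k\<le>m. nn_L2_norm_on g (dyadic_shell k)) \<le> (\<Sum>k\<le>m. ennreal (sqrt 2 ^ k) * nn_L2_norm_on g (dyadic_shell k))"
    using mult_right_mono[of 1 "ennreal (sqrt 2 ^ _)"] by (intro sum_mono) (simp add: one_le_power)
  also have "\<dots> \<le> nn_B_norm g"
    unfolding nn_B_norm_def by (rule sum_le_suminf) (auto simp: summableI)
  finally show ?thesis .
qed

lemma nn_L2_norm_on_translate_small_shell_le:
  assumes [measurable]: "g \<in> borel_measurable borel" and "j \<le> p + 1" "norm h \<le> 2 ^ p"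
  shows "nn_L2_norm_on (\<lambda>x. g (x + h)) (dyadic_shell j) \<le> (\<Sum>k\<le>p+2. nn_L2_norm_on g (dyadic_shell k))"
proof -
  have "nn_L2_norm_on (\<lambda>x. g (x + h)) (dyadic_shell j) \<le> nn_L2_norm_on g (cball 0 (2 ^ (p + 2)))"
    using assms by (intro nn_L2_norm_on_translate_le dyadic_shell_translate_small) auto
  also have "\<dots> \<le> (\<Sum>k\<le>p+2. nn_L2_norm_on g (dyadic_shell k))"
    by (rule nn_L2_norm_on_cball_le) simp
  finally show ?thesis .
qed

lemma suminf_sqrt2_power_initial_le:
  "(\<Sum>j. ennreal (sqrt 2 ^ j) * (if j \<le> p + 1 then S else 0)) \<le> ennreal (8 * sqrt 2 ^ p) * S"
proof -
  have "(\<Sum>j. ennreal (sqrt 2 ^ j) * (if j \<le> p + 1 then S else 0)) = (\<Sum>j<p+2. ennreal (sqrt 2 ^ j) * S)"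
    by (subst suminf_finite[of "{..<p+2}"]) auto
  also have "\<dots> = ennreal (\<Sum>j<p+2. sqrt 2 ^ j) * S"
    unfolding sum_distrib_right[symmetric] by (subst sum_ennreal) auto
  also have "\<dots> \<le> ennreal (8 * sqrt 2 ^ p) * S"
  proof (intro mult_right_mono ennreal_leI)
    have "(\<Sum>j<p+2. sqrt 2 ^ j) \<le> 4 * sqrt 2 ^ (p + 2)"
      by (rule sum_sqrt2_power_le)
    also have "\<dots> = 8 * sqrt 2 ^ p"
      by (simp add: power_add)
    finally show "(\<Sum>j<p+2. sqrt 2 ^ j) \<le> 8 * sqrt 2 ^ p" .
  qed simp
  finally show ?thesis .
qed

lemma nn_B_norm_translate_le_pow2:
  fixes g :: "'a::euclidean_space \<Rightarrow> ennreal"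
  assumes [measurable]: "g \<in> borel_measurable borel" and h: "norm h \<le> 2 ^ p"
  shows "nn_B_norm (\<lambda>x. g (x + h)) \<le> ennreal (8 * sqrt 2 ^ p + 5) * nn_B_norm g"
proof -
  define L where "L k = nn_L2_norm_on g (dyadic_shell k)" for k
  define c where "c j = ennreal (sqrt 2 ^ j)" for j
  define S where "S = (\<Sum>k\<le>p+2. L k)"
  let ?B = "nn_B_norm g"
  have B: "?B = (\<Sum>j. c j * L j)"
    unfolding nn_B_norm_def c_def L_def ..
  have shell: "nn_L2_norm_on (\<lambda>x. g (x + h)) (dyadic_shell j) \<le>
      (if j \<le> p + 1 then S else 0) + (L (j - 1) + L j + L (Suc j))" for j
    using nn_L2_norm_on_translate_small_shell_le[of g j p h] nn_L2_norm_on_translate_shell_le[of g p j h] h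
    unfolding S_def L_def by (cases "j \<le> p + 1") (auto intro: add_increasing2)
  have "S \<le> ?B"
    unfolding S_def L_def by (rule sum_dyadic_shells_le_nn_B_norm)
  then have head: "(\<Sum>j. c j * (if j \<le> p + 1 then S else 0)) \<le> ennreal (8 * sqrt 2 ^ p) * ?B"
    using suminf_sqrt2_power_initial_le[of p S] mult_left_mono[of S ?B "ennreal (8 * sqrt 2 ^ p)"]
    unfolding c_def by simp
  have "nn_B_norm (\<lambda>x. g (x + h)) \<le> (\<Sum>j. c j * (if j \<le> p + 1 then S else 0) +
      (c j * L (j - 1) + c j * L j + c j * L (Suc j)))"
    unfolding nn_B_norm_def c_def[symmetric] distrib_left[symmetric]
    by (intro suminf_le mult_left_mono shell) auto
  also have "\<dots> = (\<Sum>j. c j * (if j \<le> p + 1 then S else 0)) +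
      ((\<Sum>j. c j * L (j - 1)) + (\<Sum>j. c j * L j) + (\<Sum>j. c j * L (Suc j)))"
    by (simp add: suminf_add)
  also have "\<dots> \<le> ennreal (8 * sqrt 2 ^ p) * ?B + (3 * ?B + ?B + ?B)"
    using head suminf_sqrt2_power_shift_right[of L] suminf_sqrt2_power_shift_left[of L]
    unfolding B c_def by (intro add_mono) auto
  also have "\<dots> = ennreal (8 * sqrt 2 ^ p + 5) * ?B"
    by (simp add: ennreal_plus distrib_right distrib_right[of 4 1 ?B, simplified]
        distrib_right[of 3 1 ?B, simplified] add_ac)
  finally show ?thesis .
qed

lemma dyadic_scale_exists: "\<exists>p. norm h \<le> 2 ^ p \<and> sqrt 2 ^ p \<le> 2 * (1 + sqrt (norm h))"
proof -
  obtain n where "norm h < 2 ^ n"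
    using real_arch_pow[of 2 "norm h"] by auto
  define p where "p = (LEAST p. norm h \<le> 2 ^ p)"
  have "norm h \<le> 2 ^ p"
    unfolding p_def by (rule LeastI[of _ n]) (use \<open>norm h < 2 ^ n\<close> in simp)
  moreover have "sqrt 2 ^ p \<le> 2 * (1 + sqrt (norm h))"
  proof (cases p)
    case (Suc q)
    then have "\<not> norm h \<le> 2 ^ q"
      using not_less_Least[of q "\<lambda>p. norm h \<le> 2 ^ p"] unfolding p_def by simp
    then have "sqrt (2 ^ p) \<le> sqrt 2 * sqrt (norm h)"
      using Suc by (simp add: real_sqrt_mult[symmetric])
    also have "\<dots> \<le> 2 * sqrt (norm h)"
      by (intro mult_right_mono) (auto simp: real_sqrt_le_iff[of 2 4, simplified])
    finally show ?thesis
      by (simp add: real_sqrt_power)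
  qed simp
  ultimately show ?thesis
    by blast
qed

lemma nn_B_norm_translate_le:
  fixes g :: "'a::euclidean_space \<Rightarrow> ennreal"
  assumes "g \<in> borel_measurable borel"
  shows "nn_B_norm (\<lambda>x. g (x + h)) \<le> ennreal (21 + 16 * sqrt (norm h)) * nn_B_norm g"
proof -
  obtain p where p: "norm h \<le> 2 ^ p" "sqrt 2 ^ p \<le> 2 * (1 + sqrt (norm h))"
    using dyadic_scale_exists by blast
  have "nn_B_norm (\<lambda>x. g (x + h)) \<le> ennreal (8 * sqrt 2 ^ p + 5) * nn_B_norm g"
    using assms p(1) by (rule nn_B_norm_translate_le_pow2)
  also have "\<dots> \<le> ennreal (21 + 16 * sqrt (norm h)) * nn_B_norm g"
    using p(2) by (intro mult_right_mono ennreal_leI) auto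
  finally show ?thesis .
qed

lemma B_norm_translate_diff_le:
  fixes f :: "'a::euclidean_space \<Rightarrow> real"
  assumes [measurable]: "f \<in> borel_measurable borel"
  shows "B_norm (\<lambda>x. f (x + h) - f x) \<le> ennreal (22 + 16 * sqrt (norm h)) * B_norm f"
proof -
  have "B_norm (\<lambda>x. f (x + h) - f x) \<le> nn_B_norm (\<lambda>x. ennreal \<bar>f (x + h)\<bar> + ennreal \<bar>f x\<bar>)"
    unfolding B_norm_eq_nn_B_norm
    by (intro nn_B_norm_mono) (simp add: ennreal_plus[symmetric] del: ennreal_plus)
  also have "\<dots> \<le> nn_B_norm (\<lambda>x. ennreal \<bar>f (x + h)\<bar>) + B_norm f"
    unfolding B_norm_eq_nn_B_norm by (rule nn_B_norm_add) auto
  also have "\<dots> \<le> ennreal (21 + 16 * sqrt (norm h)) * B_norm f + 1 * B_norm f"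
    unfolding B_norm_eq_nn_B_norm
    by (intro add_mono nn_B_norm_translate_le[of "\<lambda>x. ennreal \<bar>f x\<bar>"]) auto
  also have "\<dots> = ennreal (22 + 16 * sqrt (norm h)) * B_norm f"
    by (simp only: distrib_right[symmetric] ennreal_1[symmetric] ennreal_plus[symmetric])
      (simp add: add.commute add.assoc[symmetric])
  finally show ?thesis .
qed

section \<open>Continuity of translation\<close>

lemma lborel_inner_compact_approx:
  fixes A :: "'a::euclidean_space set"
  assumes [measurable]: "A \<in> sets borel" and fin: "emeasure lborel A < \<infinity>" and "e > 0"
  obtains K where "compact K" "K \<subseteq> A" "emeasure lborel (A - K) < ennreal e"
proof -
  define M where "M = density lborel (indicator A :: 'a \<Rightarrow> ennreal)"
  have M: "emeasure M B = emeasure lborel (A \<inter> B)" if "B \<in> sets borel" for B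
    unfolding M_def using that
    by (subst emeasure_density)
      (auto simp: nn_integral_indicator[symmetric] indicator_inter_arith[symmetric]
        simp del: nn_integral_indicator intro!: nn_integral_cong)
  have "emeasure M (space M) \<noteq> \<infinity>"
    using M[of UNIV] fin by (simp add: M_def)
  from inner_regular[OF _ this, of A] have sup:
    "emeasure lborel A = (SUP K \<in> {K. K \<subseteq> A \<and> compact K}. emeasure lborel K)"
    using M by (auto simp: M_def compact_imp_closed Int_absorb1 intro!: SUP_cong)
  have "{K. K \<subseteq> A \<and> compact K} \<noteq> {}"
    by (auto intro!: exI[of _ "{}"])
  then have "\<exists>K\<in>{K. K \<subseteq> A \<and> compact K}. emeasure lborel A < emeasure lborel K + ennreal e"
    using fin by (intro SUP_approx_ennreal[OF \<open>e > 0\<close> _ sup]) auto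
  then obtain K where K: "K \<subseteq> A" "compact K" and "emeasure lborel A < emeasure lborel K + ennreal e"
    by blast
  moreover have [measurable]: "K \<in> sets borel"
    using K by (simp add: compact_imp_closed)
  moreover have "emeasure lborel A = emeasure lborel K + emeasure lborel (A - K)"
    using K by (subst plus_emeasure) (auto simp: Un_absorb1)
  ultimately have "emeasure lborel (A - K) < ennreal e"
    using emeasure_compact_finite[OF K(2)] by (simp add: ennreal_add_left_cancel_less)
  with K that show ?thesis
    by blast
qed

lemma nn_L2_norm_translate_diff_indicator_tendsto_0:
  fixes A :: "'a::euclidean_space set"
  assumes [measurable]: "A \<in> sets borel" and fin: "emeasure lborel A < \<infinity>"
  shows "((\<lambda>h. nn_L2_norm_on (\<lambda>x. ennreal \<bar>indicator A (x + h) - indicator A x\<bar>) UNIV) \<longlongrightarrow> 0) (at 0)"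
  unfolding nn_L2_norm_on_def
proof (rule tendsto_esqrt_0, rule tendsto_zero_ennreal)
  fix r :: real
  assume "0 < r"
  obtain K where K: "compact K" "K \<subseteq> A" "emeasure lborel (A - K) < ennreal (r / 8)"
    using lborel_inner_compact_approx[OF assms, of "r / 8"] \<open>0 < r\<close> by auto
  obtain U where U: "open U" "A \<subseteq> U" "emeasure lborel (U - A) < ennreal (r / 8)"
    using outer_regular_lborel[OF assms(1), of "r / 8"] \<open>0 < r\<close> by auto
  obtain d where "d > 0" and d: "(\<Union>x\<in>K. ball x d) \<subseteq> U"
    using compact_subset_open_imp_ball_epsilon_subset[OF K(1) U(1)] K(2) U(2) by blast
  have [measurable]: "K \<in> sets borel" "U \<in> sets borel"
    using K U by (simp_all add: compact_imp_closed)
  have "eventually (\<lambda>h::'a. norm h < d) (at 0)"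
    using \<open>d > 0\<close> by (auto simp: eventually_at)
  then show "eventually (\<lambda>h. (\<integral>\<^sup>+x. (ennreal \<bar>indicator A (x + h) - indicator A x\<bar>)\<^sup>2 * indicator UNIV x \<partial>lborel)
      < ennreal r) (at 0)"
  proof eventually_elim
    case (elim h)
    \<comment> \<open>A point counted by the integrand lies, after or before the shift, in \<open>A - K\<close> or in \<open>U - A\<close>.\<close>
    have "x + h \<in> U" if "x \<in> K" for x
      using d that elim by (force simp: dist_norm)
    moreover have "x \<in> U" if "x + h \<in> K" for x
      using d that elim by (force simp: dist_norm)
    ultimately have "(ennreal \<bar>indicator A (x + h) - indicator A x\<bar>)\<^sup>2 * indicator UNIV x \<le>
        indicator (A - K) (x + h) + indicator (U - A) x + (indicator (A - K) x + indicator (U - A) (x + h))" for x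
      using K(2) U(2) by (auto simp: indicator_def)
    then have "(\<integral>\<^sup>+x. (ennreal \<bar>indicator A (x + h) - indicator A x\<bar>)\<^sup>2 * indicator UNIV x \<partial>lborel) \<le>
        (\<integral>\<^sup>+x. indicator (A - K) (x + h) + indicator (U - A) x + (indicator (A - K) x + indicator (U - A) (x + h)) \<partial>lborel)"
      by (rule nn_integral_mono)
    also have "\<dots> = emeasure lborel (A - K) + emeasure lborel (U - A) + (emeasure lborel (A - K) + emeasure lborel (U - A))"
      by (simp add: nn_integral_add nn_integral_translate[where F = "indicator (A - K)"]
          nn_integral_translate[where F = "indicator (U - A)"])
    also have "\<dots> \<le> ennreal (r / 8) + ennreal (r / 8) + (ennreal (r / 8) + ennreal (r / 8))"
      using K(3) U(3) by (intro add_mono) auto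
    also have "\<dots> < ennreal r"
      using \<open>0 < r\<close> by (simp add: ennreal_lessI flip: ennreal_plus)
    finally show ?case .
  qed
qed

lemma emeasure_level_set_less_top:
  fixes f :: "'a::euclidean_space \<Rightarrow> real"
  assumes [measurable]: "f -` {c} \<in> sets borel"
    and "c \<noteq> 0" "nn_L2_norm_on (\<lambda>x. ennreal \<bar>f x\<bar>) UNIV < \<infinity>"
  shows "emeasure lborel (f -` {c}) < \<infinity>"
proof -
  have "(ennreal \<bar>c\<bar>)\<^sup>2 * emeasure lborel (f -` {c}) = (\<integral>\<^sup>+x. (ennreal \<bar>c\<bar>)\<^sup>2 * indicator (f -` {c}) x \<partial>lborel)"
    by (rule nn_integral_cmult_indicator[symmetric]) simp
  also have "\<dots> \<le> (nn_L2_norm_on (\<lambda>x. ennreal \<bar>f x\<bar>) UNIV)\<^sup>2"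
    unfolding nn_L2_norm_on_def power2_esqrt by (intro nn_integral_mono) (auto simp: indicator_def)
  also have "\<dots> < \<infinity>"
    using assms(3) by (simp add: power_less_top_ennreal)
  finally show ?thesis
    using \<open>c \<noteq> 0\<close> by (auto simp: ennreal_mult_less_top)
qed

lemma nn_L2_norm_translate_diff_simple_tendsto_0:
  fixes s :: "'a::euclidean_space \<Rightarrow> real"
  assumes s: "simple_function lborel s" and fin: "nn_L2_norm_on (\<lambda>x. ennreal \<bar>s x\<bar>) UNIV < \<infinity>"
  shows "((\<lambda>h. nn_L2_norm_on (\<lambda>x. ennreal \<bar>s (x + h) - s x\<bar>) UNIV) \<longlongrightarrow> 0) (at 0)"
proof -
  define D where "D c h x = ennreal \<bar>indicator (s -` {c}) (x + h) - indicator (s -` {c}) x\<bar>" for c h x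
  have [measurable]: "s -` {c} \<in> sets borel" for c
    using simple_functionD(2)[OF s, of "{c}"] by simp
  have s_eq: "s x = (\<Sum>c\<in>s ` UNIV. c * indicator (s -` {c}) x)" for x
  proof -
    have "s x = (\<Sum>c\<in>s ` space lborel. indicator (s -` {c} \<inter> space lborel) x *\<^sub>R c)"
      using s by (rule simple_function_indicator_representation_banach) simp
    also have "\<dots> = (\<Sum>c\<in>s ` UNIV. c * indicator (s -` {c}) x)"
      by (simp add: mult.commute)
    finally show ?thesis .
  qed
  have "ennreal \<bar>s (x + h) - s x\<bar> \<le> (\<Sum>c\<in>s ` UNIV. ennreal \<bar>c\<bar> * D c h x)" for x h
  proof -
    have "\<bar>s (x + h) - s x\<bar> = \<bar>\<Sum>c\<in>s ` UNIV. c * (indicator (s -` {c}) (x + h) - indicator (s -` {c}) x)\<bar>"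
      by (subst (1 2) s_eq) (simp add: sum_subtractf right_diff_distrib)
    also have "\<dots> \<le> (\<Sum>c\<in>s ` UNIV. \<bar>c\<bar> * \<bar>indicator (s -` {c}) (x + h) - indicator (s -` {c}) x\<bar>)"
      by (rule order_trans[OF sum_abs]) (simp add: abs_mult)
    finally have "ennreal \<bar>s (x + h) - s x\<bar> \<le>
        ennreal (\<Sum>c\<in>s ` UNIV. \<bar>c\<bar> * \<bar>indicator (s -` {c}) (x + h) - indicator (s -` {c}) x\<bar>)"
      by (rule ennreal_leI)
    also have "\<dots> = (\<Sum>c\<in>s ` UNIV. ennreal \<bar>c\<bar> * D c h x)"
      unfolding D_def by (subst sum_ennreal[symmetric]) (auto simp: ennreal_mult)
    finally show ?thesis .
  qed
  then have "nn_L2_norm_on (\<lambda>x. ennreal \<bar>s (x + h) - s x\<bar>) UNIV \<le>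
      nn_L2_norm_on (\<lambda>x. \<Sum>c\<in>s ` UNIV. ennreal \<bar>c\<bar> * D c h x) UNIV" for h
    by (rule nn_L2_norm_on_mono)
  also have "\<dots> h \<le> (\<Sum>c\<in>s ` UNIV. ennreal \<bar>c\<bar> * nn_L2_norm_on (D c h) UNIV)" for h
    unfolding D_def by (rule order_trans[OF nn_L2_norm_on_sum]) (auto simp: nn_L2_norm_on_cmult)
  finally have bound: "nn_L2_norm_on (\<lambda>x. ennreal \<bar>s (x + h) - s x\<bar>) UNIV \<le>
      (\<Sum>c\<in>s ` UNIV. ennreal \<bar>c\<bar> * nn_L2_norm_on (D c h) UNIV)" for h .
  have "((\<lambda>h. ennreal \<bar>c\<bar> * nn_L2_norm_on (D c h) UNIV) \<longlongrightarrow> 0) (at 0)" for c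
  proof (cases "c = 0")
    case False
    then have "((\<lambda>h. nn_L2_norm_on (D c h) UNIV) \<longlongrightarrow> 0) (at 0)"
      unfolding D_def using fin
      by (intro nn_L2_norm_translate_diff_indicator_tendsto_0 emeasure_level_set_less_top) auto
    then show ?thesis
      using ennreal_tendsto_cmult[of "ennreal \<bar>c\<bar>"] by fastforce
  qed simp
  then have "((\<lambda>h. \<Sum>c\<in>s ` UNIV. ennreal \<bar>c\<bar> * nn_L2_norm_on (D c h) UNIV) \<longlongrightarrow> (\<Sum>c\<in>s ` UNIV. 0)) (at 0)"
    by (intro tendsto_sum)
  then have lim: "((\<lambda>h. \<Sum>c\<in>s ` UNIV. ennreal \<bar>c\<bar> * nn_L2_norm_on (D c h) UNIV) \<longlongrightarrow> 0) (at 0)"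
    by simp
  show ?thesis
    by (rule tendsto_sandwich[OF _ _ tendsto_const lim]) (auto intro: always_eventually bound)
qed

lemma L2_approx_by_simple_functions:
  fixes f :: "'a::euclidean_space \<Rightarrow> real"
  assumes [measurable]: "f \<in> borel_measurable borel"
    and fin: "nn_L2_norm_on (\<lambda>x. ennreal \<bar>f x\<bar>) UNIV < \<infinity>"
  obtains F where "\<And>i. simple_function lborel (F i)" "\<And>i. nn_L2_norm_on (\<lambda>x. ennreal \<bar>F i x\<bar>) UNIV < \<infinity>"
    "(\<lambda>i. nn_L2_norm_on (\<lambda>x. ennreal \<bar>f x - F i x\<bar>) UNIV) \<longlonglongrightarrow> 0"
proof -
  obtain F where F: "\<And>i. simple_function lborel (F i)" and F_lim: "\<And>x. (\<lambda>i. F i x) \<longlonglongrightarrow> f x"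
    and F_le: "\<And>i x. \<bar>F i x\<bar> \<le> 2 * \<bar>f x\<bar>"
    using borel_measurable_implies_sequence_metric[of f lborel 0] by auto
  have [measurable]: "F i \<in> borel_measurable borel" for i
    using borel_measurable_simple_function[OF F] by simp
  have "(\<lambda>i. \<integral>\<^sup>+x. (ennreal \<bar>f x - F i x\<bar>)\<^sup>2 * indicator UNIV x \<partial>lborel) \<longlonglongrightarrow> (\<integral>\<^sup>+x. 0 \<partial>(lborel :: 'a measure))"
  proof (rule nn_integral_dominated_convergence[where w = "\<lambda>x. 9 * (ennreal \<bar>f x\<bar>)\<^sup>2"])
    show "AE x in lborel. (ennreal \<bar>f x - F i x\<bar>)\<^sup>2 * indicator UNIV x \<le> 9 * (ennreal \<bar>f x\<bar>)\<^sup>2" for i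
    proof (rule AE_I2)
      fix x
      have "\<bar>f x - F i x\<bar> \<le> 3 * \<bar>f x\<bar>"
        using F_le[of i x] by linarith
      then have "(ennreal \<bar>f x - F i x\<bar>)\<^sup>2 \<le> (ennreal (3 * \<bar>f x\<bar>))\<^sup>2"
        by (intro power_mono_ennreal ennreal_leI)
      then show "(ennreal \<bar>f x - F i x\<bar>)\<^sup>2 * indicator UNIV x \<le> 9 * (ennreal \<bar>f x\<bar>)\<^sup>2"
        by (simp add: ennreal_mult power_mult_distrib)
    qed
    show "(\<integral>\<^sup>+x. 9 * (ennreal \<bar>f x\<bar>)\<^sup>2 \<partial>lborel) < \<infinity>"
      using fin by (simp add: nn_L2_norm_on_def nn_integral_cmult ennreal_mult_less_top power_less_top_ennreal)
    show "AE x in lborel. (\<lambda>i. (ennreal \<bar>f x - F i x\<bar>)\<^sup>2 * indicator UNIV x) \<longlonglongrightarrow> 0"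
    proof (rule AE_I2)
      fix x
      have "(\<lambda>i. ennreal ((f x - F i x)\<^sup>2)) \<longlonglongrightarrow> ennreal ((f x - f x)\<^sup>2)"
        by (intro tendsto_intros F_lim)
      then show "(\<lambda>i. (ennreal \<bar>f x - F i x\<bar>)\<^sup>2 * indicator UNIV x) \<longlonglongrightarrow> 0"
        by (simp add: ennreal_power)
    qed
  qed auto
  then have "(\<lambda>i. nn_L2_norm_on (\<lambda>x. ennreal \<bar>f x - F i x\<bar>) UNIV) \<longlonglongrightarrow> 0"
    unfolding nn_L2_norm_on_def by (intro tendsto_esqrt_0) simp
  moreover have "nn_L2_norm_on (\<lambda>x. ennreal \<bar>F i x\<bar>) UNIV < \<infinity>" for i
  proof -
    have "nn_L2_norm_on (\<lambda>x. ennreal \<bar>F i x\<bar>) UNIV \<le> nn_L2_norm_on (\<lambda>x. 2 * ennreal \<bar>f x\<bar>) UNIV"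
      using ennreal_leI[OF F_le[of i]] by (intro nn_L2_norm_on_mono) (simp add: ennreal_mult)
    also have "\<dots> < \<infinity>"
      using fin by (simp add: nn_L2_norm_on_cmult ennreal_mult_less_top)
    finally show ?thesis .
  qed
  ultimately show ?thesis
    using F that by blast
qed

lemma nn_L2_norm_translate_diff_tendsto_0:
  fixes f :: "'a::euclidean_space \<Rightarrow> real"
  assumes [measurable]: "f \<in> borel_measurable borel"
    and fin: "nn_L2_norm_on (\<lambda>x. ennreal \<bar>f x\<bar>) UNIV < \<infinity>"
  shows "((\<lambda>h. nn_L2_norm_on (\<lambda>x. ennreal \<bar>f (x + h) - f x\<bar>) UNIV) \<longlongrightarrow> 0) (at 0)"
proof (rule tendsto_zero_ennreal)
  fix r :: real
  assume "0 < r"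
  obtain F where F: "\<And>i. simple_function lborel (F i)" "\<And>i. nn_L2_norm_on (\<lambda>x. ennreal \<bar>F i x\<bar>) UNIV < \<infinity>"
    and approx: "(\<lambda>i. nn_L2_norm_on (\<lambda>x. ennreal \<bar>f x - F i x\<bar>) UNIV) \<longlonglongrightarrow> 0"
    using L2_approx_by_simple_functions[OF assms] by blast
  have [measurable]: "F i \<in> borel_measurable borel" for i
    using borel_measurable_simple_function[OF F(1)] by simp
  obtain i where i: "nn_L2_norm_on (\<lambda>x. ennreal \<bar>f x - F i x\<bar>) UNIV < ennreal (r / 4)"
    using order_tendstoD(2)[OF approx, of "ennreal (r / 4)"] \<open>0 < r\<close> by (auto simp: eventually_sequentially)
  have "((\<lambda>h. nn_L2_norm_on (\<lambda>x. ennreal \<bar>F i (x + h) - F i x\<bar>) UNIV) \<longlongrightarrow> 0) (at 0)"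
    using F by (intro nn_L2_norm_translate_diff_simple_tendsto_0)
  then have "eventually (\<lambda>h. nn_L2_norm_on (\<lambda>x. ennreal \<bar>F i (x + h) - F i x\<bar>) UNIV < ennreal (r / 4)) (at 0)"
    using \<open>0 < r\<close> by (intro order_tendstoD(2)) auto
  then show "eventually (\<lambda>h. nn_L2_norm_on (\<lambda>x. ennreal \<bar>f (x + h) - f x\<bar>) UNIV < ennreal r) (at 0)"
  proof eventually_elim
    case (elim h)
    have "nn_L2_norm_on (\<lambda>x. ennreal \<bar>f (x + h) - f x\<bar>) UNIV \<le> nn_L2_norm_on (\<lambda>x.
        ennreal \<bar>f (x + h) - F i (x + h)\<bar> + (ennreal \<bar>F i (x + h) - F i x\<bar> + ennreal \<bar>f x - F i x\<bar>)) UNIV"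
      by (intro nn_L2_norm_on_mono) (simp add: ennreal_leI flip: ennreal_plus)
    also have "\<dots> \<le> nn_L2_norm_on (\<lambda>x. ennreal \<bar>f (x + h) - F i (x + h)\<bar>) UNIV +
        (nn_L2_norm_on (\<lambda>x. ennreal \<bar>F i (x + h) - F i x\<bar>) UNIV + nn_L2_norm_on (\<lambda>x. ennreal \<bar>f x - F i x\<bar>) UNIV)"
      by (intro order_trans[OF nn_L2_norm_on_add] add_left_mono nn_L2_norm_on_add) auto
    also have "\<dots> \<le> ennreal (r / 4) + (ennreal (r / 4) + ennreal (r / 4))"
      using i elim
      by (intro add_mono order_trans[OF nn_L2_norm_on_translate_le[of "\<lambda>x. ennreal \<bar>f x - F i x\<bar>"]]) auto
    also have "\<dots> < ennreal r"
      using \<open>0 < r\<close> by (simp add: ennreal_lessI flip: ennreal_plus)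
    finally show ?case .
  qed
qed

lemma nn_L2_norm_on_eq_0:
  fixes g :: "'a::euclidean_space \<Rightarrow> ennreal"
  assumes "\<And>x. x \<in> A \<Longrightarrow> g x = 0"
  shows "nn_L2_norm_on g A = 0"
proof -
  have "(\<integral>\<^sup>+x. (g x)\<^sup>2 * indicator A x \<partial>lborel) = (\<integral>\<^sup>+x. 0 \<partial>(lborel :: 'a measure))"
    using assms by (intro nn_integral_cong) (auto simp: indicator_def)
  then show ?thesis
    by (simp add: nn_L2_norm_on_def)
qed

lemma nn_B_norm_le_of_support:
  fixes g :: "'a::euclidean_space \<Rightarrow> ennreal"
  assumes "\<And>x. 2 ^ J < norm x \<Longrightarrow> g x = 0"
  shows "nn_B_norm g \<le> ennreal (\<Sum>j\<le>J. sqrt 2 ^ j) * nn_L2_norm_on g UNIV"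
proof -
  have "nn_L2_norm_on g (dyadic_shell j) = 0" if "J < j" for j
  proof (rule nn_L2_norm_on_eq_0)
    fix x :: 'a
    assume "x \<in> dyadic_shell j"
    then have "2 ^ (j - 1) < norm x"
      using that by (intro dyadic_shell_norm_gt) auto
    moreover have "(2::real) ^ J \<le> 2 ^ (j - 1)"
      using that by (intro power_increasing) auto
    ultimately show "g x = 0"
      by (intro assms) linarith
  qed
  then have "nn_B_norm g = (\<Sum>j\<le>J. ennreal (sqrt 2 ^ j) * nn_L2_norm_on g (dyadic_shell j))"
    unfolding nn_B_norm_def by (intro suminf_finite) auto
  also have "\<dots> \<le> (\<Sum>j\<le>J. ennreal (sqrt 2 ^ j) * nn_L2_norm_on g UNIV)"
    by (intro sum_mono mult_left_mono nn_L2_norm_on_mono_set) auto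
  also have "\<dots> = ennreal (\<Sum>j\<le>J. sqrt 2 ^ j) * nn_L2_norm_on g UNIV"
    unfolding sum_distrib_right[symmetric] by (subst sum_ennreal) auto
  finally show ?thesis .
qed

lemma ennreal_suminf_tail_tendsto_0:
  fixes a :: "nat \<Rightarrow> ennreal"
  assumes "(\<Sum>j. a j) < \<infinity>"
  shows "(\<lambda>J. \<Sum>j. a j * indicator {J..} j) \<longlonglongrightarrow> 0"
proof -
  have "(\<lambda>J. \<integral>\<^sup>+j. a j * indicator {J..} j \<partial>count_space UNIV) \<longlonglongrightarrow> (\<integral>\<^sup>+j. 0 \<partial>count_space (UNIV :: nat set))"
  proof (rule nn_integral_dominated_convergence[where w = a])
    show "AE j in count_space UNIV. (\<lambda>J. a j * indicator {J..} j) \<longlonglongrightarrow> 0"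
    proof (rule AE_I2)
      fix j :: nat
      have "eventually (\<lambda>J. a j * indicator {J..} j = 0) sequentially"
        using eventually_gt_at_top[of j] by eventually_elim (auto simp: indicator_def)
      then show "(\<lambda>J. a j * indicator {J..} j) \<longlonglongrightarrow> 0"
        by (rule tendsto_eventually)
    qed
  qed (use assms in \<open>auto simp: nn_integral_count_space_nat indicator_def\<close>)
  then show ?thesis
    by (simp add: nn_integral_count_space_nat)
qed

lemma nn_B_norm_outside_cball_le:
  fixes g :: "'a::euclidean_space \<Rightarrow> ennreal"
  shows "nn_B_norm (\<lambda>x. g x * indicator (- cball 0 (2 ^ J)) x) \<le>
    (\<Sum>j. ennreal (sqrt 2 ^ j) * nn_L2_norm_on g (dyadic_shell j) * indicator {Suc J..} j)"
  unfolding nn_B_norm_def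
proof (intro suminf_le)
  fix j
  show "ennreal (sqrt 2 ^ j) * nn_L2_norm_on (\<lambda>x. g x * indicator (- cball 0 (2 ^ J)) x) (dyadic_shell j)
      \<le> ennreal (sqrt 2 ^ j) * nn_L2_norm_on g (dyadic_shell j) * indicator {Suc J..} j"
  proof (cases "J < j")
    case True
    then show ?thesis
      by (auto intro!: mult_left_mono nn_L2_norm_on_mono simp: indicator_def)
  next
    case False
    then have "(2::real) ^ j \<le> 2 ^ J"
      by (intro power_increasing) auto
    then have "x \<in> cball 0 (2 ^ J)" if "x \<in> dyadic_shell j" for x :: 'a
      unfolding mem_cball_0 using dyadic_shell_norm_le[OF that] by linarith
    then have "nn_L2_norm_on (\<lambda>x. g x * indicator (- cball 0 (2 ^ J)) x) (dyadic_shell j) = 0"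
      by (intro nn_L2_norm_on_eq_0) (simp add: indicator_def)
    then show ?thesis
      by simp
  qed
qed auto

lemma B_norm_add_le:
  assumes "f \<in> borel_measurable borel" "g \<in> borel_measurable borel"
  shows "B_norm (\<lambda>x. f x + g x) \<le> B_norm f + B_norm g"
proof -
  have "B_norm (\<lambda>x. f x + g x) \<le> nn_B_norm (\<lambda>x. ennreal \<bar>f x\<bar> + ennreal \<bar>g x\<bar>)"
    unfolding B_norm_eq_nn_B_norm
    by (intro nn_B_norm_mono) (simp add: ennreal_leI abs_triangle_ineq flip: ennreal_plus)
  also have "\<dots> \<le> B_norm f + B_norm g"
    unfolding B_norm_eq_nn_B_norm using assms by (intro nn_B_norm_add) auto
  finally show ?thesis .
qed

lemma B_norm_outside_cball_tendsto_0:
  fixes f :: "'a::euclidean_space \<Rightarrow> real"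
  assumes "B_norm f < \<infinity>"
  shows "(\<lambda>J. B_norm (\<lambda>x. f x * indicator (- cball 0 (2 ^ J)) x)) \<longlonglongrightarrow> 0"
proof -
  define a where "a j = ennreal (sqrt 2 ^ j) * nn_L2_norm_on (\<lambda>x. ennreal \<bar>f x\<bar>) (dyadic_shell j)" for j
  have "(\<lambda>J. \<Sum>j. a j * indicator {J..} j) \<longlonglongrightarrow> 0"
    using assms unfolding B_norm_eq_nn_B_norm nn_B_norm_def a_def by (intro ennreal_suminf_tail_tendsto_0) simp
  then have lim: "(\<lambda>J. \<Sum>j. a j * indicator {Suc J..} j) \<longlonglongrightarrow> 0"
    by (rule LIMSEQ_Suc)
  have bound: "B_norm (\<lambda>x. f x * indicator (- cball 0 (2 ^ J)) x) \<le> (\<Sum>j. a j * indicator {Suc J..} j)" for J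
    unfolding B_norm_eq_nn_B_norm a_def abs_mult
    by (simp add: ennreal_mult ennreal_indicator nn_B_norm_outside_cball_le)
  show ?thesis
    by (rule tendsto_sandwich[OF _ _ tendsto_const lim]) (auto intro: always_eventually bound)
qed

lemma nn_L2_norm_inside_cball_less_top:
  fixes f :: "'a::euclidean_space \<Rightarrow> real"
  assumes "f \<in> borel_measurable borel" "B_norm f < \<infinity>"
  shows "nn_L2_norm_on (\<lambda>x. ennreal \<bar>f x * indicator (cball 0 (2 ^ J)) x\<bar>) UNIV < \<infinity>"
proof -
  have "nn_L2_norm_on (\<lambda>x. ennreal \<bar>f x * indicator (cball 0 (2 ^ J)) x\<bar>) UNIV =
      nn_L2_norm_on (\<lambda>x. ennreal \<bar>f x\<bar>) (cball 0 (2 ^ J))"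
    unfolding nn_L2_norm_on_def by (intro arg_cong[where f = esqrt] nn_integral_cong) (simp add: indicator_def)
  also have "\<dots> \<le> (\<Sum>k\<le>J. nn_L2_norm_on (\<lambda>x. ennreal \<bar>f x\<bar>) (dyadic_shell k))"
    using assms(1) by (intro nn_L2_norm_on_cball_le) simp
  also have "\<dots> < \<infinity>"
    using sum_dyadic_shells_le_nn_B_norm assms(2) unfolding B_norm_eq_nn_B_norm by (rule le_less_trans)
  finally show ?thesis .
qed

lemma B_norm_translate_diff_le_of_support:
  fixes F :: "'a::euclidean_space \<Rightarrow> real"
  assumes "\<And>x. 2 ^ J < norm x \<Longrightarrow> F x = 0" and "norm h < 1"
  shows "B_norm (\<lambda>x. F (x + h) - F x) \<le>
    ennreal (\<Sum>j\<le>Suc J. sqrt 2 ^ j) * nn_L2_norm_on (\<lambda>x. ennreal \<bar>F (x + h) - F x\<bar>) UNIV"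
  unfolding B_norm_eq_nn_B_norm
proof (rule nn_B_norm_le_of_support)
  fix x :: 'a
  assume "2 ^ Suc J < norm x"
  moreover have "norm x - 1 < norm (x + h)"
    using norm_triangle_ineq2[of x "- h"] assms(2) by simp
  moreover have "(1::real) \<le> 2 ^ J" "(2::real) ^ Suc J = 2 * 2 ^ J"
    by simp_all
  ultimately have "2 ^ J < norm x" "2 ^ J < norm (x + h)"
    by linarith+
  then show "ennreal \<bar>F (x + h) - F x\<bar> = 0"
    by (simp add: assms(1))
qed

lemma B_norm_translate_diff_tendsto_0:
  fixes f :: "'a::euclidean_space \<Rightarrow> real"
  assumes [measurable]: "f \<in> borel_measurable borel" and fin: "B_norm f < \<infinity>"
  shows "((\<lambda>h. B_norm (\<lambda>x. f (x + h) - f x)) \<longlongrightarrow> 0) (at 0)"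
proof (rule tendsto_zero_ennreal)
  fix r :: real
  assume "0 < r"
  have "eventually (\<lambda>J. B_norm (\<lambda>x. f x * indicator (- cball 0 (2 ^ J)) x) < ennreal (r / 80)) sequentially"
    using \<open>0 < r\<close> by (intro order_tendstoD(2)[OF B_norm_outside_cball_tendsto_0[OF fin]]) simp
  then obtain J where G_small: "B_norm (\<lambda>x. f x * indicator (- cball 0 (2 ^ J)) x) < ennreal (r / 80)"
    using eventually_happens'[OF sequentially_bot] by blast
  define F where "F x = f x * indicator (cball 0 (2 ^ J)) x" for x
  define G where "G x = f x * indicator (- cball 0 (2 ^ J)) x" for x
  define C where "C = (\<Sum>j\<le>Suc J. sqrt 2 ^ j)"
  have [measurable]: "cball (0::'a) (2 ^ J) \<in> sets borel"
    by simp
  have [measurable]: "F \<in> borel_measurable borel" "G \<in> borel_measurable borel"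
    unfolding F_def G_def by measurable
  have "C > 0"
    unfolding C_def by (intro sum_pos) auto
  have "((\<lambda>h. nn_L2_norm_on (\<lambda>x. ennreal \<bar>F (x + h) - F x\<bar>) UNIV) \<longlongrightarrow> 0) (at 0)"
    unfolding F_def using fin by (intro nn_L2_norm_translate_diff_tendsto_0 nn_L2_norm_inside_cball_less_top) auto
  then have "eventually (\<lambda>h. nn_L2_norm_on (\<lambda>x. ennreal \<bar>F (x + h) - F x\<bar>) UNIV < ennreal (r / (2 * C))) (at 0)"
    using \<open>0 < r\<close> \<open>0 < C\<close> by (intro order_tendstoD(2)) auto
  moreover have "eventually (\<lambda>h::'a. norm h < 1) (at 0)"
    by (auto simp: eventually_at intro!: exI[of _ 1])
  ultimately show "eventually (\<lambda>h. B_norm (\<lambda>x. f (x + h) - f x) < ennreal r) (at 0)"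
  proof eventually_elim
    case (elim h)
    have "f x = F x + G x" for x
      by (simp add: F_def G_def indicator_def)
    then have "B_norm (\<lambda>x. f (x + h) - f x) = B_norm (\<lambda>x. (F (x + h) - F x) + (G (x + h) - G x))"
      by (simp add: algebra_simps)
    also have "\<dots> \<le> B_norm (\<lambda>x. F (x + h) - F x) + B_norm (\<lambda>x. G (x + h) - G x)"
      by (rule B_norm_add_le) auto
    also have "\<dots> \<le> ennreal (r / 2) + ennreal (38 * (r / 80))"
    proof (intro add_mono)
      have "B_norm (\<lambda>x. F (x + h) - F x) \<le> ennreal C * nn_L2_norm_on (\<lambda>x. ennreal \<bar>F (x + h) - F x\<bar>) UNIV"
        using elim(2) unfolding C_def by (intro B_norm_translate_diff_le_of_support) (simp_all add: F_def mem_cball_0)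
      also have "\<dots> \<le> ennreal C * ennreal (r / (2 * C))"
        using elim(1) by (intro mult_left_mono) auto
      also have "\<dots> = ennreal (r / 2)"
        using \<open>0 < C\<close> \<open>0 < r\<close> by (simp add: ennreal_mult[symmetric])
      finally show "B_norm (\<lambda>x. F (x + h) - F x) \<le> ennreal (r / 2)" .
      have "B_norm (\<lambda>x. G (x + h) - G x) \<le> ennreal (22 + 16 * sqrt (norm h)) * B_norm G"
        by (rule B_norm_translate_diff_le) simp
      also have "\<dots> \<le> ennreal 38 * ennreal (r / 80)"
        using elim(2) G_small unfolding G_def by (intro mult_mono ennreal_leI) (auto intro: less_imp_le)
      also have "\<dots> = ennreal (38 * (r / 80))"
        using \<open>0 < r\<close> by (intro ennreal_mult[symmetric]) auto
      finally show "B_norm (\<lambda>x. G (x + h) - G x) \<le> ennreal (38 * (r / 80))" .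
    qed
    also have "\<dots> < ennreal r"
      using \<open>0 < r\<close> by (simp add: ennreal_lessI flip: ennreal_plus)
    finally show ?case .
  qed
qed

section \<open>Mollification\<close>

lemma borel_measurable_mollify [measurable]:
  assumes [measurable]: "\<phi> \<in> borel_measurable borel"
  shows "mollify \<phi> \<epsilon> \<in> borel_measurable borel"
  unfolding mollify_def by measurable

lemma borel_measurable_convol [measurable]:
  fixes g :: "'a::euclidean_space \<Rightarrow> real"
  assumes [measurable]: "g \<in> borel_measurable borel" "(\<lambda>(t, x). U t x) \<in> borel_measurable (M \<Otimes>\<^sub>M lborel)"
  shows "(\<lambda>(t, x). convol g (U t) x) \<in> borel_measurable (M \<Otimes>\<^sub>M lborel)"
proof -
  have "(\<lambda>(p, y). g (snd p - y) * U (fst p) y) \<in> borel_measurable ((M \<Otimes>\<^sub>M lborel) \<Otimes>\<^sub>M lborel)"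
    by measurable
  from lborel.borel_measurable_lebesgue_integral[OF this] show ?thesis
    by (simp add: convol_def case_prod_beta')
qed

lemma borel_measurable_B_norm_sub_convol [measurable]:
  fixes g :: "'a::euclidean_space \<Rightarrow> real"
  assumes "g \<in> borel_measurable borel" "(\<lambda>(t, x). U t x) \<in> borel_measurable (M \<Otimes>\<^sub>M lborel)"
  shows "(\<lambda>t. B_norm (\<lambda>x. U t x - convol g (U t) x)) \<in> borel_measurable M"
  by (rule borel_measurable_B_norm) (use assms in measurable)

lemma convol_mollify_eq:
  fixes \<phi> f :: "'a::euclidean_space \<Rightarrow> real"
  assumes [measurable]: "\<phi> \<in> borel_measurable borel" "f \<in> borel_measurable borel" and "\<epsilon> > 0"
  shows "convol (mollify \<phi> \<epsilon>) f x = (\<integral>w. \<phi> w * f (x - \<epsilon> *\<^sub>R w) \<partial>lborel)"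
proof -
  define G where "G y = mollify \<phi> \<epsilon> (x - y) * f y" for y
  have [measurable]: "G \<in> borel_measurable borel"
    unfolding G_def by measurable
  have "lborel = density (distr lborel borel (\<lambda>w. x + (- \<epsilon>) *\<^sub>R w)) (\<lambda>_. \<bar>- \<epsilon>\<bar> ^ DIM('a))"
    using \<open>\<epsilon> > 0\<close> by (intro lborel_affine) simp
  then have "convol (mollify \<phi> \<epsilon>) f x =
      integral\<^sup>L (density (distr lborel borel (\<lambda>w. x + (- \<epsilon>) *\<^sub>R w)) (\<lambda>_. \<bar>- \<epsilon>\<bar> ^ DIM('a))) G"
    unfolding convol_def G_def by simp
  also have "\<dots> = (\<integral>w. \<bar>- \<epsilon>\<bar> ^ DIM('a) *\<^sub>R G (x + (- \<epsilon>) *\<^sub>R w) \<partial>lborel)"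
    by (subst integral_density) (auto simp: integral_distr)
  also have "\<dots> = (\<integral>w. \<phi> w * f (x - \<epsilon> *\<^sub>R w) \<partial>lborel)"
  proof (intro Bochner_Integration.integral_cong refl)
    fix w
    have "\<bar>- \<epsilon>\<bar> ^ DIM('a) * (1 / \<epsilon>) ^ DIM('a) = 1"
      using \<open>\<epsilon> > 0\<close> by (simp add: power_mult_distrib[symmetric])
    then show "\<bar>- \<epsilon>\<bar> ^ DIM('a) *\<^sub>R G (x + (- \<epsilon>) *\<^sub>R w) = \<phi> w * f (x - \<epsilon> *\<^sub>R w)"
      using \<open>\<epsilon> > 0\<close> unfolding G_def mollify_def by (simp add: mult.assoc[symmetric])
  qed
  finally show ?thesis .
qed

lemma abs_sub_convol_mollify_le:
  fixes \<phi> f :: "'a::euclidean_space \<Rightarrow> real"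
  assumes \<phi>: "integrable lborel \<phi>" "(\<integral>y. \<phi> y \<partial>lborel) = 1"
    and [measurable]: "f \<in> borel_measurable borel" and "\<epsilon> > 0"
  shows "ennreal \<bar>f x - convol (mollify \<phi> \<epsilon>) f x\<bar> \<le>
    (\<integral>\<^sup>+w. ennreal \<bar>\<phi> w\<bar> * ennreal \<bar>f x - f (x - \<epsilon> *\<^sub>R w)\<bar> \<partial>lborel)" (is "_ \<le> ?R")
proof (cases "?R = \<infinity>")
  case False
  have [measurable]: "\<phi> \<in> borel_measurable borel"
    using borel_measurable_integrable[OF \<phi>(1)] by simp
  define d where "d w = \<phi> w * (f x - f (x - \<epsilon> *\<^sub>R w))" for w
  have [measurable]: "d \<in> borel_measurable borel"
    unfolding d_def by measurable
  have "integrable lborel d"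
    using False by (simp add: integrable_iff_bounded d_def abs_mult ennreal_mult less_top)
  \<comment> \<open>Since \<open>\<integral> \<phi> = 1\<close>, the difference is the integral of \<open>d\<close>.\<close>
  moreover have "f x - convol (mollify \<phi> \<epsilon>) f x = (\<integral>w. d w \<partial>lborel)"
  proof -
    have "integrable lborel (\<lambda>w. \<phi> w * f (x - \<epsilon> *\<^sub>R w))"
      using Bochner_Integration.integrable_diff[OF integrable_mult_left[OF \<phi>(1), of "f x"] \<open>integrable lborel d\<close>]
      by (simp add: d_def algebra_simps)
    then show ?thesis
      using \<phi> \<open>\<epsilon> > 0\<close> by (simp add: convol_mollify_eq d_def right_diff_distrib)
  qed
  ultimately have "ennreal \<bar>f x - convol (mollify \<phi> \<epsilon>) f x\<bar> \<le> (\<integral>\<^sup>+w. norm (d w) \<partial>lborel)"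
    using integral_norm_bound_ennreal[of lborel d] by simp
  also have "\<dots> = ?R"
    by (intro nn_integral_cong) (simp add: d_def abs_mult ennreal_mult)
  finally show ?thesis .
qed simp

lemma B_norm_sub_convol_mollify_le:
  fixes \<phi> f :: "'a::euclidean_space \<Rightarrow> real"
  assumes \<phi>: "integrable lborel \<phi>" "(\<integral>y. \<phi> y \<partial>lborel) = 1"
    and [measurable]: "f \<in> borel_measurable borel" and "\<epsilon> > 0"
  shows "B_norm (\<lambda>x. f x - convol (mollify \<phi> \<epsilon>) f x) \<le>
    (\<integral>\<^sup>+w. ennreal \<bar>\<phi> w\<bar> * B_norm (\<lambda>x. f (x - \<epsilon> *\<^sub>R w) - f x) \<partial>lborel)"
proof -
  have [measurable]: "\<phi> \<in> borel_measurable borel"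
    using borel_measurable_integrable[OF \<phi>(1)] by simp
  define H where "H p = ennreal \<bar>\<phi> (fst p)\<bar> * ennreal \<bar>f (snd p) - f (snd p - \<epsilon> *\<^sub>R fst p)\<bar>"
    for p :: "'a \<times> 'a"
  have [measurable]: "H \<in> borel_measurable (lborel \<Otimes>\<^sub>M lborel)"
    unfolding H_def by measurable
  have "B_norm (\<lambda>x. f x - convol (mollify \<phi> \<epsilon>) f x) \<le> nn_B_norm (\<lambda>x. \<integral>\<^sup>+w. H (w, x) \<partial>lborel)"
    unfolding B_norm_eq_nn_B_norm H_def
    using abs_sub_convol_mollify_le[OF \<phi> _ \<open>\<epsilon> > 0\<close>] by (intro nn_B_norm_mono) simp
  also have "\<dots> \<le> (\<integral>\<^sup>+w. nn_B_norm (\<lambda>x. H (w, x)) \<partial>lborel)"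
    by (rule nn_B_norm_Minkowski) simp
  also have "\<dots> = (\<integral>\<^sup>+w. ennreal \<bar>\<phi> w\<bar> * B_norm (\<lambda>x. f (x - \<epsilon> *\<^sub>R w) - f x) \<partial>lborel)"
    unfolding H_def B_norm_eq_nn_B_norm
    by (intro nn_integral_cong) (simp add: nn_B_norm_cmult abs_minus_commute)
  finally show ?thesis .
qed

lemma nn_integral_dominated_convergence_at_right:
  fixes u :: "real \<Rightarrow> 'a \<Rightarrow> ennreal"
  assumes "a < b" and [measurable]: "\<And>t. u t \<in> borel_measurable M" "u' \<in> borel_measurable M"
    "w \<in> borel_measurable M"
    and bound: "\<And>t. a < t \<Longrightarrow> t < b \<Longrightarrow> AE x in M. u t x \<le> w x"
    and w: "(\<integral>\<^sup>+x. w x \<partial>M) < \<infinity>"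
    and lim: "AE x in M. ((\<lambda>t. u t x) \<longlongrightarrow> u' x) (at_right a)"
  shows "((\<lambda>t. \<integral>\<^sup>+x. u t x \<partial>M) \<longlongrightarrow> (\<integral>\<^sup>+x. u' x \<partial>M)) (at_right a)"
proof (rule tendsto_at_right_sequentially[OF \<open>a < b\<close>])
  fix S :: "nat \<Rightarrow> real"
  assume S: "\<And>n. a < S n" "\<And>n. S n < b" "S \<longlonglongrightarrow> a"
  then have "filterlim S (at_right a) sequentially"
    by (intro tendsto_imp_filterlim_at_right) auto
  from lim have "AE x in M. (\<lambda>n. u (S n) x) \<longlonglongrightarrow> u' x"
    by eventually_elim (rule filterlim_compose[OF _ \<open>filterlim S (at_right a) sequentially\<close>])
  with S(1,2) show "(\<lambda>n. \<integral>\<^sup>+x. u (S n) x \<partial>M) \<longlonglongrightarrow> (\<integral>\<^sup>+x. u' x \<partial>M)"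
    by (intro nn_integral_dominated_convergence[OF _ _ _ bound w]) auto
qed

lemma mollifier_weight_finite:
  fixes \<phi> :: "'a::euclidean_space \<Rightarrow> real"
  assumes "integrable lborel \<phi>" "(\<integral>\<^sup>+ y. ennreal (sqrt (norm y) * \<bar>\<phi> y\<bar>) \<partial>lborel) < \<infinity>"
  shows "(\<integral>\<^sup>+w. ennreal (\<bar>\<phi> w\<bar> * (22 + 16 * sqrt (norm w))) \<partial>lborel) < \<infinity>"
proof -
  have [measurable]: "\<phi> \<in> borel_measurable borel"
    using borel_measurable_integrable[OF assms(1)] by simp
  have "(\<integral>\<^sup>+w. ennreal (\<bar>\<phi> w\<bar> * (22 + 16 * sqrt (norm w))) \<partial>lborel) =
      (\<integral>\<^sup>+w. 22 * ennreal \<bar>\<phi> w\<bar> + 16 * ennreal (sqrt (norm w) * \<bar>\<phi> w\<bar>) \<partial>lborel)"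
    by (intro nn_integral_cong) (simp add: algebra_simps ennreal_plus ennreal_mult flip: ennreal_numeral)
  also have "\<dots> = 22 * (\<integral>\<^sup>+w. ennreal \<bar>\<phi> w\<bar> \<partial>lborel) + 16 * (\<integral>\<^sup>+ y. ennreal (sqrt (norm y) * \<bar>\<phi> y\<bar>) \<partial>lborel)"
    by (simp add: nn_integral_add nn_integral_cmult)
  also have "\<dots> < \<infinity>"
    using assms by (simp add: integrable_iff_bounded ennreal_mult_less_top)
  finally show ?thesis .
qed

lemma B_norm_scaled_translate_diff_le:
  fixes f :: "'a::euclidean_space \<Rightarrow> real"
  assumes "f \<in> borel_measurable borel" "0 \<le> \<epsilon>" "\<epsilon> \<le> 1"
  shows "B_norm (\<lambda>x. f (x - \<epsilon> *\<^sub>R w) - f x) \<le> ennreal (22 + 16 * sqrt (norm w)) * B_norm f"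
proof -
  have "B_norm (\<lambda>x. f (x - \<epsilon> *\<^sub>R w) - f x) \<le> ennreal (22 + 16 * sqrt (norm (\<epsilon> *\<^sub>R w))) * B_norm f"
    using B_norm_translate_diff_le[OF assms(1), of "- (\<epsilon> *\<^sub>R w)"] by simp
  also have "\<dots> \<le> ennreal (22 + 16 * sqrt (norm w)) * B_norm f"
    using assms(2,3) by (intro mult_right_mono ennreal_leI) (auto simp: mult_left_le_one_le)
  finally show ?thesis .
qed

lemma B_norm_sub_convol_mollify_le_const:
  fixes \<phi> f :: "'a::euclidean_space \<Rightarrow> real"
  assumes \<phi>: "integrable lborel \<phi>" "(\<integral>y. \<phi> y \<partial>lborel) = 1"
    and [measurable]: "f \<in> borel_measurable borel" and "0 < \<epsilon>" "\<epsilon> \<le> 1"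
  shows "B_norm (\<lambda>x. f x - convol (mollify \<phi> \<epsilon>) f x) \<le>
    (\<integral>\<^sup>+w. ennreal (\<bar>\<phi> w\<bar> * (22 + 16 * sqrt (norm w))) \<partial>lborel) * B_norm f"
proof -
  have [measurable]: "\<phi> \<in> borel_measurable borel"
    using borel_measurable_integrable[OF \<phi>(1)] by simp
  have "B_norm (\<lambda>x. f x - convol (mollify \<phi> \<epsilon>) f x) \<le>
      (\<integral>\<^sup>+w. ennreal \<bar>\<phi> w\<bar> * B_norm (\<lambda>x. f (x - \<epsilon> *\<^sub>R w) - f x) \<partial>lborel)"
    using \<phi> \<open>0 < \<epsilon>\<close> by (intro B_norm_sub_convol_mollify_le) auto
  also have "\<dots> \<le> (\<integral>\<^sup>+w. ennreal (\<bar>\<phi> w\<bar> * (22 + 16 * sqrt (norm w))) * B_norm f \<partial>lborel)"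
    using B_norm_scaled_translate_diff_le[of f \<epsilon>] \<open>0 < \<epsilon>\<close> \<open>\<epsilon> \<le> 1\<close>
    by (intro nn_integral_mono) (simp add: ennreal_mult mult.assoc mult_left_mono)
  finally show ?thesis
    by (simp add: nn_integral_multc)
qed

lemma B_norm_sub_convol_mollify_tendsto_0:
  fixes \<phi> f :: "'a::euclidean_space \<Rightarrow> real"
  assumes \<phi>: "integrable lborel \<phi>" "(\<integral>y. \<phi> y \<partial>lborel) = 1"
    and moment: "(\<integral>\<^sup>+ y. ennreal (sqrt (norm y) * \<bar>\<phi> y\<bar>) \<partial>lborel) < \<infinity>"
    and [measurable]: "f \<in> borel_measurable borel" and fin: "B_norm f < \<infinity>"
  shows "((\<lambda>\<epsilon>. B_norm (\<lambda>x. f x - convol (mollify \<phi> \<epsilon>) f x)) \<longlongrightarrow> 0) (at_right 0)"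
proof -
  have [measurable]: "\<phi> \<in> borel_measurable borel"
    using borel_measurable_integrable[OF \<phi>(1)] by simp
  define D where "D \<epsilon> w = ennreal \<bar>\<phi> w\<bar> * B_norm (\<lambda>x. f (x - \<epsilon> *\<^sub>R w) - f x)" for \<epsilon> and w :: 'a
  define W where "W w = ennreal (\<bar>\<phi> w\<bar> * (22 + 16 * sqrt (norm w))) * B_norm f" for w :: 'a
  have [measurable]: "D \<epsilon> \<in> borel_measurable lborel" for \<epsilon>
    unfolding D_def by (measurable, rule borel_measurable_B_norm) measurable
  have [measurable]: "W \<in> borel_measurable lborel"
    unfolding W_def by measurable
  have "((\<lambda>\<epsilon>. B_norm (\<lambda>x. f (x - \<epsilon> *\<^sub>R w) - f x)) \<longlongrightarrow> 0) (at_right 0)" for w :: 'a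
  proof (cases "w = 0")
    case True
    then show ?thesis
      by (simp add: B_norm_eq_nn_B_norm nn_B_norm_def nn_L2_norm_on_def)
  next
    case False
    have "filterlim (\<lambda>\<epsilon>. - (\<epsilon> *\<^sub>R w)) (at 0) (at_right 0)"
    proof (rule filterlim_atI)
      show "((\<lambda>\<epsilon>. - (\<epsilon> *\<^sub>R w)) \<longlongrightarrow> 0) (at_right 0)"
        by (auto intro!: tendsto_eq_intros)
      show "eventually (\<lambda>\<epsilon>. - (\<epsilon> *\<^sub>R w) \<noteq> 0) (at_right 0)"
        using eventually_at_right_less[of 0] by eventually_elim (use False in simp)
    qed
    from filterlim_compose[OF B_norm_translate_diff_tendsto_0[OF _ fin] this] show ?thesis
      by simp
  qed
  then have "((\<lambda>\<epsilon>. D \<epsilon> w) \<longlongrightarrow> 0) (at_right 0)" for w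
    using ennreal_tendsto_cmult[of "ennreal \<bar>\<phi> w\<bar>"] unfolding D_def by fastforce
  moreover have "AE w in lborel. D \<epsilon> w \<le> W w" if "0 < \<epsilon>" "\<epsilon> < 1" for \<epsilon>
    using B_norm_scaled_translate_diff_le[of f \<epsilon>] that
    by (intro AE_I2) (simp add: D_def W_def ennreal_mult mult.assoc mult_left_mono)
  moreover have "(\<integral>\<^sup>+w. W w \<partial>lborel) < \<infinity>"
    using mollifier_weight_finite[OF \<phi>(1) moment] fin
    by (simp add: W_def nn_integral_multc ennreal_mult_less_top)
  ultimately have "((\<lambda>\<epsilon>. \<integral>\<^sup>+w. D \<epsilon> w \<partial>lborel) \<longlongrightarrow> (\<integral>\<^sup>+w. 0 \<partial>(lborel :: 'a measure))) (at_right 0)"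
    by (intro nn_integral_dominated_convergence_at_right[where b = 1 and w = W]) auto
  then have lim: "((\<lambda>\<epsilon>. \<integral>\<^sup>+w. D \<epsilon> w \<partial>lborel) \<longlongrightarrow> 0) (at_right 0)"
    by simp
  have le: "eventually (\<lambda>\<epsilon>. B_norm (\<lambda>x. f x - convol (mollify \<phi> \<epsilon>) f x) \<le> (\<integral>\<^sup>+w. D \<epsilon> w \<partial>lborel)) (at_right 0)"
    using eventually_at_right_less[of 0] unfolding D_def
    by eventually_elim (rule B_norm_sub_convol_mollify_le[OF \<phi>]; simp)
  show ?thesis
    by (rule tendsto_sandwich[OF _ le tendsto_const lim]) simp
qed

theorem lemma3p3:
  fixes \<phi> :: "'a::euclidean_space \<Rightarrow> real"
    and U :: "real \<Rightarrow> 'a \<Rightarrow> real"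
    and T :: real
  assumes phi_L1: "integrable lborel \<phi>"
    and phi_int: "(\<integral> y. \<phi> y \<partial>lborel) = 1"
    and phi_moment: "(\<integral>\<^sup>+ y. ennreal (sqrt (norm y) * \<bar>\<phi> y\<bar>) \<partial>lborel) < \<infinity>"
    and T_pos: "T > 0"
    and U_meas: "(\<lambda>(t, x). U t x) \<in> borel_measurable (lborel \<Otimes>\<^sub>M lborel)"
    and U_L1B: "(\<integral>\<^sup>+ t \<in> {0<..<T}. B_norm (U t) \<partial>lborel) < \<infinity>"
  shows "((\<lambda>\<epsilon>. \<integral>\<^sup>+ t \<in> {0<..<T}.
            B_norm (\<lambda>x. U t x - convol (mollify \<phi> \<epsilon>) (U t) x) \<partial>lborel)
          \<longlongrightarrow> 0) (at_right 0)"
proof -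
  have [measurable]: "\<phi> \<in> borel_measurable borel"
    using borel_measurable_integrable[OF phi_L1] by simp
  note U_meas [measurable]
  have [measurable]: "U t \<in> borel_measurable borel" for t
    using measurable_Pair2[OF U_meas, of t] by simp
  have [measurable]: "(\<lambda>t. B_norm (U t)) \<in> borel_measurable lborel"
    by (rule borel_measurable_B_norm) measurable
  define G where "G \<epsilon> t = B_norm (\<lambda>x. U t x - convol (mollify \<phi> \<epsilon>) (U t) x) * indicator {0<..<T} t"
    for \<epsilon> t
  define W where "W t = (\<integral>\<^sup>+w. ennreal (\<bar>\<phi> w\<bar> * (22 + 16 * sqrt (norm w))) \<partial>lborel) *
    (B_norm (U t) * indicator {0<..<T} t)" for t
  have [measurable]: "G \<epsilon> \<in> borel_measurable lborel" "W \<in> borel_measurable lborel" for \<epsilon>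
    unfolding G_def W_def by measurable
  have "AE t in lborel. G \<epsilon> t \<le> W t" if "0 < \<epsilon>" "\<epsilon> < 1" for \<epsilon>
    using B_norm_sub_convol_mollify_le_const[OF phi_L1 phi_int, of "U _" \<epsilon>] that
    by (intro AE_I2) (simp add: G_def W_def indicator_def)
  moreover have "(\<integral>\<^sup>+t. W t \<partial>lborel) < \<infinity>"
    using mollifier_weight_finite[OF phi_L1 phi_moment] U_L1B
    by (simp add: W_def nn_integral_cmult ennreal_mult_less_top)
  moreover have "AE t in lborel. B_norm (U t) * indicator {0<..<T} t \<noteq> \<infinity>"
    using U_L1B by (intro nn_integral_noteq_infinite) auto
  then have "AE t in lborel. ((\<lambda>\<epsilon>. G \<epsilon> t) \<longlongrightarrow> 0) (at_right 0)"
  proof eventually_elim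
    case (elim t)
    then show ?case
      using B_norm_sub_convol_mollify_tendsto_0[OF phi_L1 phi_int phi_moment, of "U t"]
      by (cases "t \<in> {0<..<T}") (simp_all add: G_def less_top)
  qed
  ultimately have "((\<lambda>\<epsilon>. \<integral>\<^sup>+t. G \<epsilon> t \<partial>lborel) \<longlongrightarrow> (\<integral>\<^sup>+t. 0 \<partial>(lborel :: real measure))) (at_right 0)"
    by (intro nn_integral_dominated_convergence_at_right[where b = 1 and w = W]) auto
  then show ?thesis
    by (simp add: G_def)
qed

end
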